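(* Let $G$ be a finite simple graph of order $n$ without isolated vertices, with $\gamma_t(G)=2$ and maximum degree $\Delta(G)\le n-2$. Then $$\tau(G)\le \binom{n}{2}-\left\lceil \frac{n}{2}\right\rceil,$$ and this bound is sharp (attained with equality by some such graph).
   Context: A set $D \subseteq V(G)$ is a total dominating set of $G$ if every vertex of $G$ has a neighbor in $D$. $\gamma_t(G)$ is the minimum cardinality of a total dominating set; a minimum one is a $\gamma_t(G)$-set, and $\tau(G)$ is the number of $\gamma_t(G)$-sets. *)

theory Defs
  imports Complex_Main
begin

definition simple_graph :: "'a set \<Rightarrow> ('a \<Rightarrow> 'a \<Rightarrow> bool) \<Rightarrow> bool" where
  "simple_graph V E \<longleftrightarrow> finite V \<and> (\<forall>u v. E u v \<longrightarrow> u \<in> V \<and> v \<in> V)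
     \<and> (\<forall>u v. E u v \<longrightarrow> E v u) \<and> (\<forall>v. \<not> E v v)"

definition degree :: "'a set \<Rightarrow> ('a \<Rightarrow> 'a \<Rightarrow> bool) \<Rightarrow> 'a \<Rightarrow> nat" where
  "degree V E v = card {u \<in> V. E v u}"

definition no_isolated :: "'a set \<Rightarrow> ('a \<Rightarrow> 'a \<Rightarrow> bool) \<Rightarrow> bool" where
  "no_isolated V E \<longleftrightarrow> (\<forall>v\<in>V. \<exists>u\<in>V. E v u)"

definition total_dominating :: "'a set \<Rightarrow> ('a \<Rightarrow> 'a \<Rightarrow> bool) \<Rightarrow> 'a set \<Rightarrow> bool" where
  "total_dominating V E D \<longleftrightarrow> D \<subseteq> V \<and> (\<forall>v\<in>V. \<exists>u\<in>D. E v u)"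

definition gamma_t :: "'a set \<Rightarrow> ('a \<Rightarrow> 'a \<Rightarrow> bool) \<Rightarrow> nat" where
  "gamma_t V E = (LEAST k. \<exists>D. total_dominating V E D \<and> card D = k)"

definition gamma_t_sets :: "'a set \<Rightarrow> ('a \<Rightarrow> 'a \<Rightarrow> bool) \<Rightarrow> 'a set set" where
  "gamma_t_sets V E = {D. total_dominating V E D \<and> card D = gamma_t V E}"

definition tau :: "'a set \<Rightarrow> ('a \<Rightarrow> 'a \<Rightarrow> bool) \<Rightarrow> nat" where
  "tau V E = card (gamma_t_sets V E)"

end

theory Submission
  imports Defs
begin

text \<open>Since \<open>\<Delta>(G) \<le> n - 2\<close>, every vertex \<open>w\<close> has a non-neighbour \<open>x \<noteq> w\<close>, and the
  pair \<open>{w, x}\<close> cannot be a total dominating set because \<open>w\<close> has no neighbour in it.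
  These pairs cover all \<open>n\<close> vertices, so there are at least \<open>\<lceil>n/2\<rceil>\<close> of them, and they
  are all excluded from the \<open>\<gamma>\<^sub>t(G)\<close>-sets, which are 2-subsets of \<open>V\<close>.
  Equality holds for the 4-cycle, whose \<open>\<gamma>\<^sub>t\<close>-sets are the 4 pairs other than
  its two diagonals.\<close>

lemma exists_non_neighbour:
  assumes "simple_graph V E" "no_isolated V E" "\<forall>v\<in>V. degree V E v \<le> card V - 2"
    and "w \<in> V"
  shows "\<exists>x\<in>V. x \<noteq> w \<and> \<not> E w x"
proof (rule ccontr)
  assume "\<not> ?thesis"
  with assms(1) have nbhd: "{u \<in> V. E w u} = V - {w}"
    by (auto simp: simple_graph_def)
  have "finite V"
    using assms(1) by (simp add: simple_graph_def)
  obtain u where "u \<in> V" "E w u"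
    using assms(2,4) by (auto simp: no_isolated_def)
  with nbhd have "{w, u} \<subseteq> V" "u \<noteq> w"
    using assms(4) by auto
  then have "card V \<ge> 2"
    using \<open>finite V\<close> by (metis card_2_iff card_mono)
  moreover have "degree V E w = card V - 1"
    using \<open>finite V\<close> assms(4) by (simp add: degree_def nbhd)
  ultimately show False
    using assms(3,4) by force
qed

lemma not_total_dominating_non_adjacent_pair:
  assumes "simple_graph V E" "w \<in> V" "\<not> E w x"
  shows "\<not> total_dominating V E {w, x}"
  using assms by (auto simp: total_dominating_def simple_graph_def)

lemma card_le_twice_card_doubletons:
  assumes "finite V"
  shows "card V \<le> 2 * card ((\<lambda>w. {w, f w}) ` V)"
proof -
  let ?P = "(\<lambda>w. {w, f w}) ` V"
  have "card V \<le> card (\<Union>?P)"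
    using assms by (intro card_mono) auto
  also have "\<dots> \<le> sum card ?P"
    by (rule card_Union_le_sum_card)
  also have "\<dots> \<le> sum (\<lambda>_. 2) ?P"
    by (intro sum_mono) (auto simp: card_insert_if)
  finally show ?thesis
    by simp
qed

lemma tau_le_choose_minus_excluded_pairs:
  assumes "simple_graph V E" "gamma_t V E = 2"
    and "P \<subseteq> {D. D \<subseteq> V \<and> card D = 2}" "\<forall>D\<in>P. \<not> total_dominating V E D"
  shows "tau V E + card P \<le> card V choose 2"
proof -
  let ?S = "{D. D \<subseteq> V \<and> card D = 2}"
  have "finite V"
    using assms(1) by (simp add: simple_graph_def)
  then have "finite ?S"
    by simp
  have "gamma_t_sets V E \<subseteq> ?S - P"
  proof
    fix D
    assume "D \<in> gamma_t_sets V E"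
    then have "total_dominating V E D" "card D = 2"
      using assms(2) by (simp_all add: gamma_t_sets_def)
    moreover from this have "D \<notin> P"
      using assms(4) by blast
    ultimately show "D \<in> ?S - P"
      by (simp add: total_dominating_def)
  qed
  then have "tau V E \<le> card (?S - P)"
    unfolding tau_def using \<open>finite ?S\<close> by (intro card_mono) auto
  also have "\<dots> = (card V choose 2) - card P"
    using assms(3) \<open>finite V\<close> by (simp add: card_Diff_subset finite_subset n_subsets)
  finally show ?thesis
    using card_mono[OF \<open>finite ?S\<close> assms(3)] \<open>finite V\<close> by (simp add: n_subsets)
qed

theorem tau_upper_bound:
  assumes "simple_graph V E" "no_isolated V E" "gamma_t V E = 2"
    and "\<forall>v\<in>V. degree V E v \<le> card V - 2"
  shows "int (tau V E) \<le> int (card V choose 2) - \<lceil>real (card V) / 2\<rceil>"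
proof -
  obtain f where f: "\<forall>w\<in>V. f w \<in> V \<and> f w \<noteq> w \<and> \<not> E w (f w)"
    using exists_non_neighbour[OF assms(1,2,4)] by metis
  let ?P = "(\<lambda>w. {w, f w}) ` V"
  have "tau V E + card ?P \<le> card V choose 2"
    using f assms(1) not_total_dominating_non_adjacent_pair[OF assms(1)]
    by (intro tau_le_choose_minus_excluded_pairs[OF assms(1,3)]) auto
  moreover have "card V \<le> 2 * card ?P"
    using assms(1) by (intro card_le_twice_card_doubletons) (simp add: simple_graph_def)
  then have "\<lceil>real (card V) / 2\<rceil> \<le> int (card ?P)"
    by (simp add: ceiling_le_iff)
  ultimately show ?thesis
    by linarith
qed

definition cycle4 :: "nat \<Rightarrow> nat \<Rightarrow> bool" where
  "cycle4 u v \<longleftrightarrow> u \<in> {0, 1, 2, 3} \<and> v \<in> {0, 1, 2, 3} \<and> odd (u + v)"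

lemma neighbours_cycle4:
  assumes "v \<in> {0, 1, 2, 3}"
  shows "{u \<in> {0, 1, 2, 3}. cycle4 v u} = (if even v then {1, 3} else {0, 2})"
  using assms by (auto simp: cycle4_def)

lemma total_dominating_cycle4_iff:
  "total_dominating {0, 1, 2, 3} cycle4 D \<longleftrightarrow>
     D \<subseteq> {0, 1, 2, 3} \<and> D \<inter> {0, 2} \<noteq> {} \<and> D \<inter> {1, 3} \<noteq> {}"
proof -
  have nb: "(\<exists>u\<in>D. cycle4 v u) \<longleftrightarrow> D \<inter> (if even v then {1, 3} else {0, 2}) \<noteq> {}"
    if "v \<in> {0, 1, 2, 3}" for v
  proof -
    have "(\<exists>u\<in>D. cycle4 v u) \<longleftrightarrow> D \<inter> {u \<in> {0, 1, 2, 3}. cycle4 v u} \<noteq> {}"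
      unfolding cycle4_def by blast
    then show ?thesis
      by (simp only: neighbours_cycle4[OF that])
  qed
  show ?thesis
    unfolding total_dominating_def using nb[of 0] nb[of 1] nb[of 2] nb[of 3] by auto
qed

lemma gamma_t_cycle4: "gamma_t {0, 1, 2, 3} cycle4 = 2"
  unfolding gamma_t_def
proof (rule Least_equality)
  show "\<exists>D. total_dominating {0, 1, 2, 3} cycle4 D \<and> card D = 2"
    by (rule exI[of _ "{0, 1}"]) (unfold total_dominating_cycle4_iff, simp)
next
  fix k
  assume "\<exists>D. total_dominating {0, 1, 2, 3} cycle4 D \<and> card D = k"
  then obtain D :: "nat set" where "D \<subseteq> {0, 1, 2, 3}" "D \<inter> {0, 2} \<noteq> {}" "D \<inter> {1, 3} \<noteq> {}" "card D = k"
    unfolding total_dominating_cycle4_iff by blast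
  then obtain a b where "a \<in> D" "b \<in> D" "even a" "odd b"
    by auto
  moreover have "finite D"
    using \<open>D \<subseteq> _\<close> by (rule finite_subset) simp
  ultimately have "card {a, b} \<le> card D"
    by (intro card_mono) auto
  moreover have "a \<noteq> b"
    using \<open>even a\<close> \<open>odd b\<close> by auto
  ultimately show "2 \<le> k"
    using \<open>card D = k\<close> by simp
qed

lemma gamma_t_sets_cycle4:
  "gamma_t_sets {0, 1, 2, 3} cycle4 = {{0, 1}, {0, 3}, {2, 1}, {2, 3}}" (is "?L = ?R")
proof
  show "?R \<subseteq> ?L"
    unfolding gamma_t_sets_def gamma_t_cycle4 total_dominating_cycle4_iff by auto
  show "?L \<subseteq> ?R"
  proof
    fix D :: "nat set"
    assume "D \<in> ?L"
    then have D: "D \<subseteq> {0, 1, 2, 3}" "D \<inter> {0, 2} \<noteq> {}" "D \<inter> {1, 3} \<noteq> {}" "card D = 2"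
      unfolding gamma_t_sets_def gamma_t_cycle4 total_dominating_cycle4_iff by auto
    then obtain a b where ab: "a \<in> {0, 2}" "b \<in> {1, 3}" "{a, b} \<subseteq> D"
      by blast
    moreover have "finite D"
      using D(1) by (rule finite_subset) simp
    moreover have "card {a, b} = card D"
      using ab(1,2) D(4) by auto
    ultimately have "D = {a, b}"
      by (intro card_subset_eq[symmetric])
    then show "D \<in> ?R"
      using ab(1,2) by auto
  qed
qed

theorem cycle4_attains_bound:
  defines "V \<equiv> {0, 1, 2, 3 :: nat}"
  shows "simple_graph V cycle4" "no_isolated V cycle4" "gamma_t V cycle4 = 2"
    "\<forall>v\<in>V. degree V cycle4 v \<le> card V - 2"
    "int (tau V cycle4) = int (card V choose 2) - \<lceil>real (card V) / 2\<rceil>"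
proof -
  show "simple_graph V cycle4"
    unfolding simple_graph_def cycle4_def V_def by auto
  have neighbours: "{u \<in> V. cycle4 v u} = (if even v then {1, 3} else {0, 2})" if "v \<in> V" for v
    using neighbours_cycle4 that unfolding V_def by blast
  then have "\<forall>v\<in>V. {u \<in> V. cycle4 v u} \<noteq> {}"
    by simp
  then show "no_isolated V cycle4"
    unfolding no_isolated_def by blast
  show "gamma_t V cycle4 = 2"
    unfolding V_def by (rule gamma_t_cycle4)
  have "degree V cycle4 v = 2" if "v \<in> V" for v
    using neighbours[OF that] by (simp add: degree_def)
  then show "\<forall>v\<in>V. degree V cycle4 v \<le> card V - 2"
    by (simp add: V_def)
  have "tau V cycle4 = 4"
    unfolding tau_def V_def gamma_t_sets_cycle4 by (simp add: doubleton_eq_iff)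
  then show "int (tau V cycle4) = int (card V choose 2) - \<lceil>real (card V) / 2\<rceil>"
    by (simp add: V_def choose_two)
qed

theorem proposition2p16:
  shows "(\<forall>(V :: 'a set) E.
            simple_graph V E \<and> no_isolated V E \<and> gamma_t V E = 2 \<and>
            (\<forall>v\<in>V. degree V E v \<le> card V - 2)
            \<longrightarrow> int (tau V E) \<le> int (card V choose 2) - \<lceil>real (card V) / 2\<rceil>)
       \<and> (\<exists>(V :: nat set) E.
            simple_graph V E \<and> no_isolated V E \<and> gamma_t V E = 2 \<and>
            (\<forall>v\<in>V. degree V E v \<le> card V - 2) \<and>
            int (tau V E) = int (card V choose 2) - \<lceil>real (card V) / 2\<rceil>)"
  using tau_upper_bound cycle4_attains_bound by blast

end
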